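(* Consider Algorithm 3 (described in the context) under the Standing Assumption, Matrix Assumption and Gradient Assumption of the context. For all $k\in\mathbb{N}$, $\mathbb{E}_k[\bar d_k]=d_k$, $\mathbb{E}_k[\bar u_k]=u_k$, and $\mathbb{E}_k[\bar y_k]=y_k$. Moreover, there exists $\kappa_d>0$, independent of $k$ and of the run of the algorithm, such that $\mathbb{E}_k[\|\bar d_k-d_k\|_2]\le\kappa_d\sqrt M$ for all $k$.
   Context: Problem: $\min_x f(x)$ s.t. $c(x)=0$, $f(x)=\mathbb{E}[F(x,\omega)]$, $c:\mathbb{R}^n\to\mathbb{R}^m$ deterministic. Notation: $g_k=\nabla f(x_k)$, $c_k=c(x_k)$, $J_k=\nabla c(x_k)^T$; $\Delta q(x,\tau,g,H,d)=-\tau(g^Td+\frac12\max\{d^THd,0\})+\|c(x)\|_1$. Standing Assumption: an open convex set $\mathcal X$ contains all iterates; $f$ is $C^1$, bounded below on $\mathcal X$, $\nabla f$ bounded and $L$-Lipschitz on $\mathcal X$; $c$, $\nabla c^T$ bounded on $\mathcal X$; $\nabla c_i$ is $\gamma_i$-Lipschitz on $\mathcal X$; singular values of $\nabla c(x)^T$ bounded away from zero uniformly over $\mathcal X$; $\Gamma:=\sum_i\gamma_i$. Matrix Assumption: deterministic symmetric $H_k$, chosen independently of the stochastic gradients, with $\|H_k\|_2\le\kappa_H$ and $u^TH_ku\ge\zeta\|u\|_2^2$ whenever $J_ku=0$. Algorithm 3 (inputs $x_0$, $\bar\tau_{-1}>0$, $\epsilon,\sigma\in(0,1)$, $\bar\xi_{-1}>0$,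 $\{\beta_k\}\subset(0,1]$, $\theta\ge0$): at iteration $k$, obtain stochastic gradient $\bar g_k$; $(\bar d_k,\bar y_k)$ solves $H_k\bar d_k+J_k^T\bar y_k=-\bar g_k$, $J_k\bar d_k=-c_k$ (assumed $\bar d_k\neq0$). $\bar\tau_k^{trial}=\infty$ if $\bar g_k^T\bar d_k+\max\{\bar d_k^TH_k\bar d_k,0\}\le0$, else $\frac{(1-\sigma)\|c_k\|_1}{\bar g_k^T\bar d_k+\max\{\bar d_k^TH_k\bar d_k,0\}}$; $\bar\tau_k=\bar\tau_{k-1}$ if $\bar\tau_{k-1}\le\bar\tau_k^{trial}$, else $(1-\epsilon)\bar\tau_k^{trial}$. $\bar\xi_k^{trial}=\frac{\Delta q(x_k,\bar\tau_k,\bar g_k,H_k,\bar d_k)}{\bar\tau_k\|\bar d_k\|_2^2}$; $\bar\xi_k=\bar\xi_{k-1}$ if $\bar\xi_{k-1}\le\bar\xi_k^{trial}$, else $(1-\epsilon)\bar\xi_k^{trial}$. With $D_k=(\bar\tau_kL+\Gamma)\|\bar d_k\|_2^2$, $\hat a_k=\beta_k\Delta q(x_k,\bar\tau_k,\bar g_k,H_k,\bar d_k)/D_k$, $\tilde a_k=\hat a_k-4\|c_k\|_1/D_k$, project both onto $[a_k,a_k+\theta\beta_k^2]$ with $a_k=\frac{\beta_k\bar\xi_k\bar\tau_k}{\bar\tau_kL+\Gamma}$ to get $\widehat\alpha_k,\widetilde\alpha_k$; $\bar\alpha_k=\widehat\alpha_k$ if $\widehat\alpha_k<1$, $1$ if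 $\widetilde\alpha_k\le1\le\widehat\alpha_k$, $\widetilde\alpha_k$ if $\widetilde\alpha_k>1$; $x_{k+1}=x_k+\bar\alpha_k\bar d_k$. Gradient Assumption: $\mathbb{E}_k[\bar g_k]=g_k$ and $\mathbb{E}_k[\|\bar g_k-g_k\|_2^2]\le M$, where $\mathbb{E}_k$ is expectation w.r.t. $\omega$ conditioned on the algorithm having reached $x_k$ at iteration $k$. Deterministic counterpart: $(d_k,y_k)$ solves $H_kd_k+J_k^Ty_k=-g_k$, $J_kd_k=-c_k$. Decompositions: $\bar d_k=\bar u_k+v_k$, $d_k=u_k+v_k$ with $\bar u_k,u_k\in\mathrm{Null}(J_k)$, $v_k\in\mathrm{Range}(J_k^T)$. *)

theory Defs
  imports "HOL-Probability.Probability"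
begin

text \<open>Norms on real^'n are Euclidean.
  "Singular values of J(x) bounded away from zero uniformly" is rendered as:
  the smallest singular value of the (full row rank) m x n matrix J(x) is at least
  some sigma > 0, i.e. norm (J(x)^T z) >= sigma * norm z for all z.\<close>
definition standing_assumption ::
  "(real^'n) set \<Rightarrow> (real^'n \<Rightarrow> real) \<Rightarrow> (real^'n \<Rightarrow> real^'n)
   \<Rightarrow> (real^'n \<Rightarrow> real^'m) \<Rightarrow> (real^'n \<Rightarrow> real^'n^'m) \<Rightarrow> real \<Rightarrow> ('m \<Rightarrow> real) \<Rightarrow> bool" where
  "standing_assumption X f gradf c J L \<gamma> \<longleftrightarrow>
     open X \<and> convex X \<and>
     (\<forall>x\<in>X. (f has_derivative (\<lambda>h. gradf x \<bullet> h)) (at x)) \<and>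
     continuous_on X gradf \<and>
     bdd_below (f ` X) \<and>
     bounded (gradf ` X) \<and>
     (\<forall>x\<in>X. \<forall>x'\<in>X. norm (gradf x - gradf x') \<le> L * norm (x - x')) \<and>
     bounded (c ` X) \<and>
     (\<forall>x\<in>X. (c has_derivative (\<lambda>h. J x *v h)) (at x)) \<and>
     bounded (J ` X) \<and>
     (\<forall>i. \<forall>x\<in>X. \<forall>x'\<in>X. norm (J x $ i - J x' $ i) \<le> \<gamma> i * norm (x - x')) \<and>
     (\<exists>\<sigma>>0. \<forall>x\<in>X. \<forall>z. \<sigma> * norm z \<le> norm (transpose (J x) *v z))"

definition matrix_assumption ::
  "real^'n^'n \<Rightarrow> real^'n^'m \<Rightarrow> real \<Rightarrow> real \<Rightarrow> bool" where
  "matrix_assumption H Jk \<kappa>H \<zeta> \<longleftrightarrow>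
     transpose H = H \<and>
     onorm (\<lambda>v. H *v v) \<le> \<kappa>H \<and>
     (\<forall>u. Jk *v u = 0 \<longrightarrow> \<zeta> * (norm u)\<^sup>2 \<le> u \<bullet> (H *v u))"

text \<open>Gradient Assumption at iteration k: P is the (conditional, given x_k) law of omega,
  gbar the stochastic gradient, g = gradf x_k the true gradient, Mv the variance bound M.\<close>
definition gradient_assumption ::
  "'w measure \<Rightarrow> ('w \<Rightarrow> real^'n) \<Rightarrow> real^'n \<Rightarrow> real \<Rightarrow> bool" where
  "gradient_assumption P gbar g Mv \<longleftrightarrow>
     0 \<le> Mv \<and>
     integrable P gbar \<and> (\<integral>\<omega>. gbar \<omega> \<partial>P) = g \<and>
     (\<integral>\<^sup>+\<omega>. ennreal ((norm (gbar \<omega> - g))\<^sup>2) \<partial>P) \<le> ennreal Mv"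

end

theory Submission
  imports Defs
begin

text \<open>Because \<open>H\<close> is positive definite on the null space of \<open>J\<close> and \<open>J\<^sup>T\<close> is injective,
  the KKT operator is invertible, so the stochastic step \<open>(dbar, ybar)\<close> is an affine function of
  the stochastic gradient \<open>gbar\<close>, and unbiasedness is linearity of expectation. The error
  \<open>dbar - d\<close> lies in the null space of \<open>J\<close> and solves the KKT system with right-hand side
  \<open>g - gbar\<close>; pairing that system with \<open>dbar - d\<close> eliminates the multiplier term and gives
  \<open>\<zeta> \<parallel>dbar - d\<parallel> \<le> \<parallel>gbar - g\<parallel>\<close>. Jensen's inequality bounds the expectation of the right-hand
  side by \<open>sqrt M\<close>, so \<open>\<kappa>\<^sub>d = 1/\<zeta>\<close> works.\<close>

lemma inner_transpose_mult_vector: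
  fixes A :: "real^'n^'m"
  shows "u \<bullet> (transpose A *v y) = (A *v u) \<bullet> y"
  by (metis dot_lmul_matrix vector_transpose_matrix)

lemma kkt_null_step_norm_le:
  fixes H :: "real^'n^'n" and J :: "real^'n^'m"
  assumes H_pos: "\<forall>u. J *v u = 0 \<longrightarrow> \<zeta> * (norm u)\<^sup>2 \<le> u \<bullet> (H *v u)" and "0 < \<zeta>"
    and step: "H *v \<delta> + transpose J *v \<eta> = - e" and null: "J *v \<delta> = 0"
  shows "\<zeta> * norm \<delta> \<le> norm e"
proof -
  have "H *v \<delta> = - e - transpose J *v \<eta>"
    using step by (simp only: eq_diff_eq)
  then have "\<delta> \<bullet> (H *v \<delta>) = - (\<delta> \<bullet> e) - (J *v \<delta>) \<bullet> \<eta>"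
    by (simp only: inner_diff_right inner_minus_right inner_transpose_mult_vector)
  also have "\<dots> \<le> norm \<delta> * norm e"
    using norm_cauchy_schwarz[of "- \<delta>" e] by (simp add: null)
  finally have "\<zeta> * (norm \<delta>)\<^sup>2 \<le> norm \<delta> * norm e"
    using H_pos null by (meson order_trans)
  then show ?thesis
    using \<open>0 < \<zeta>\<close> by (cases "norm \<delta> = 0") (auto simp: power2_eq_square)
qed

lemma kkt_solution_affine:
  fixes H :: "real^'n^'n" and J :: "real^'n^'m"
  assumes H_pos: "\<forall>u. J *v u = 0 \<longrightarrow> \<zeta> * (norm u)\<^sup>2 \<le> u \<bullet> (H *v u)" and "0 < \<zeta>"
    and "0 < \<sigma>" and J_full_rank: "\<forall>z. \<sigma> * norm z \<le> norm (transpose J *v z)"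
  obtains A b where "bounded_linear A"
    and "\<And>a y g. H *v a + transpose J *v y = - g \<Longrightarrow> J *v a = r \<Longrightarrow> (a, y) = A g + b"
proof -
  define K where "K = (\<lambda>(a, y). (H *v a + transpose J *v y, J *v a))"
  have "linear K"
    unfolding K_def
    by (rule linearI)
      (auto simp: matrix_vector_right_distrib matrix_vector_mult_scaleR scaleR_right_distrib
        simp del: transpose_matrix_vector)
  moreover have "inj K"
  proof (rule linear_injective_0[THEN iffD2, OF \<open>linear K\<close>], intro allI impI)
    fix p :: "(real^'n) \<times> (real^'m)"
    obtain a y where p: "p = (a, y)" by fastforce
    assume "K p = 0"
    then have step: "H *v a + transpose J *v y = - 0" and null: "J *v a = 0"
      by (auto simp: K_def p zero_prod_def)
    have "a = 0"
      using kkt_null_step_norm_le[OF H_pos \<open>0 < \<zeta>\<close> step null] \<open>0 < \<zeta>\<close>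
      by (simp add: mult_le_0_iff)
    then have "\<sigma> * norm y \<le> 0"
      using step J_full_rank by (metis add_0 matrix_vector_mult_0_right neg_0_equal_iff_equal norm_zero)
    then have "y = 0"
      using \<open>0 < \<sigma>\<close> by (simp add: mult_le_0_iff)
    with \<open>a = 0\<close> show "p = 0" by (simp add: p zero_prod_def)
  qed
  ultimately obtain G where "linear G" and G_inverse: "\<And>p. G (K p) = p"
    using linear_injective_left_inverse by (metis comp_apply id_apply)
  show thesis
  proof
    have "linear (\<lambda>g::real^'n. (- g, 0::real^'m))"
      by (rule linearI) auto
    then have "linear (\<lambda>g. G (- g, 0))"
      using linear_compose[OF _ \<open>linear G\<close>] by (simp add: o_def)
    then show "bounded_linear (\<lambda>g. G (- g, 0))"
      by (simp add: linear_conv_bounded_linear)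
    fix a y g
    assume "H *v a + transpose J *v y = - g" "J *v a = r"
    then have "(a, y) = G (- g, r)"
      using G_inverse[of "(a, y)"] by (simp add: K_def)
    also have "\<dots> = G (- g, 0) + G (0, r)"
      using linear_add[OF \<open>linear G\<close>, of "(- g, 0)" "(0, r)"] by simp
    finally show "(a, y) = G (- g, 0) + G (0, r)" .
  qed
qed

lemma (in prob_space) integral_bounded_linear_affine:
  fixes X :: "'a \<Rightarrow> 'b::{banach, second_countable_topology}"
    and T :: "'b \<Rightarrow> 'c::{banach, second_countable_topology}"
  assumes X: "integrable M X" and T: "bounded_linear T"
    and Y: "\<And>\<omega>. \<omega> \<in> space M \<Longrightarrow> Y \<omega> = T (X \<omega>) + b"
  shows "integrable M Y" and "(\<integral>\<omega>. Y \<omega> \<partial>M) = T (\<integral>\<omega>. X \<omega> \<partial>M) + b"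
proof -
  have TX: "integrable M (\<lambda>\<omega>. T (X \<omega>))"
    using integrable_bounded_linear[OF T X] .
  then show "integrable M Y"
    by (subst Bochner_Integration.integrable_cong[OF refl Y]) auto
  have "(\<integral>\<omega>. Y \<omega> \<partial>M) = (\<integral>\<omega>. T (X \<omega>) + b \<partial>M)"
    by (rule Bochner_Integration.integral_cong) (auto simp: Y)
  also have "\<dots> = (\<integral>\<omega>. T (X \<omega>) \<partial>M) + b"
    using TX by (simp add: prob_space)
  also have "\<dots> = T (\<integral>\<omega>. X \<omega> \<partial>M) + b"
    using integral_bounded_linear[OF T X] by simp
  finally show "(\<integral>\<omega>. Y \<omega> \<partial>M) = T (\<integral>\<omega>. X \<omega> \<partial>M) + b" .
qed

lemma (in prob_space) integral_le_sqrt_second_moment: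
  fixes Z :: "'a \<Rightarrow> real"
  assumes Z: "integrable M Z" and second_moment: "(\<integral>\<^sup>+\<omega>. ennreal ((Z \<omega>)\<^sup>2) \<partial>M) \<le> ennreal m"
    and "0 \<le> m"
  shows "(\<integral>\<omega>. Z \<omega> \<partial>M) \<le> sqrt m"
proof -
  have Z2: "integrable M (\<lambda>\<omega>. (Z \<omega>)\<^sup>2)"
  proof (rule integrableI_bounded)
    show "(\<lambda>\<omega>. (Z \<omega>)\<^sup>2) \<in> borel_measurable M"
      using Z by measurable
    show "(\<integral>\<^sup>+\<omega>. ennreal (norm ((Z \<omega>)\<^sup>2)) \<partial>M) < \<infinity>"
      using second_moment by simp (metis ennreal_less_top le_less_trans)
  qed
  have "ennreal (\<integral>\<omega>. (Z \<omega>)\<^sup>2 \<partial>M) = (\<integral>\<^sup>+\<omega>. ennreal ((Z \<omega>)\<^sup>2) \<partial>M)"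
    by (rule nn_integral_eq_integral[OF Z2, symmetric]) auto
  also note second_moment
  finally have "(\<integral>\<omega>. (Z \<omega>)\<^sup>2 \<partial>M) \<le> m"
    using \<open>0 \<le> m\<close> by (simp add: ennreal_le_iff)
  moreover have "(\<integral>\<omega>. Z \<omega> \<partial>M)\<^sup>2 \<le> (\<integral>\<omega>. (Z \<omega>)\<^sup>2 \<partial>M)"
    using jensens_inequality[where I=UNIV and q=power2, OF Z _ _ Z2 convex_power2] by auto
  ultimately show ?thesis
    by (meson order_trans real_le_rsqrt)
qed

lemma (in prob_space) stochastic_kkt_solution_unbiased:
  fixes H :: "real^'n^'n" and J :: "real^'n^'m"
  assumes "matrix_assumption H J \<kappa>H \<zeta>" and "0 < \<zeta>"
    and "0 < \<sigma>" and "\<forall>z. \<sigma> * norm z \<le> norm (transpose J *v z)"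
    and gbar: "integrable M gbar" "(\<integral>\<omega>. gbar \<omega> \<partial>M) = g"
    and sample: "\<forall>\<omega>\<in>space M. H *v dbar \<omega> + transpose J *v ybar \<omega> = - gbar \<omega> \<and> J *v dbar \<omega> = r"
    and exact: "H *v d + transpose J *v y = - g" "J *v d = r"
  shows "integrable M dbar \<and> (\<integral>\<omega>. dbar \<omega> \<partial>M) = d"
    and "integrable M ybar \<and> (\<integral>\<omega>. ybar \<omega> \<partial>M) = y"
proof -
  obtain A b where A: "bounded_linear A"
    and solution: "\<And>a y g. H *v a + transpose J *v y = - g \<Longrightarrow> J *v a = r \<Longrightarrow> (a, y) = A g + b"
    using kkt_solution_affine assms(1-4) unfolding matrix_assumption_def by metis
  have sample_solution: "\<And>\<omega>. \<omega> \<in> space M \<Longrightarrow> (dbar \<omega>, ybar \<omega>) = A (gbar \<omega>) + b"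
    using sample solution by blast
  have "(d, y) = A g + b"
    using solution exact .
  then show "integrable M dbar \<and> (\<integral>\<omega>. dbar \<omega> \<partial>M) = d"
    using integral_bounded_linear_affine[OF gbar(1) bounded_linear_compose[OF bounded_linear_fst A],
        of dbar "fst b"] sample_solution gbar(2)
    by (metis fst_add fst_conv)
  from \<open>(d, y) = A g + b\<close> show "integrable M ybar \<and> (\<integral>\<omega>. ybar \<omega> \<partial>M) = y"
    using integral_bounded_linear_affine[OF gbar(1) bounded_linear_compose[OF bounded_linear_snd A],
        of ybar "snd b"] sample_solution gbar(2)
    by (metis snd_add snd_conv)
qed

lemma (in prob_space) stochastic_kkt_deviation_bound:
  fixes H :: "real^'n^'n" and J :: "real^'n^'m"
  assumes "matrix_assumption H J \<kappa>H \<zeta>" and "0 < \<zeta>"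
    and "gradient_assumption M gbar g m" and "integrable M dbar"
    and sample: "\<forall>\<omega>\<in>space M. H *v dbar \<omega> + transpose J *v ybar \<omega> = - gbar \<omega> \<and> J *v dbar \<omega> = r"
    and exact: "H *v d + transpose J *v y = - g" "J *v d = r"
  shows "integrable M (\<lambda>\<omega>. norm (dbar \<omega> - d))"
    and "(\<integral>\<omega>. norm (dbar \<omega> - d) \<partial>M) \<le> sqrt m / \<zeta>"
proof -
  have H_pos: "\<forall>u. J *v u = 0 \<longrightarrow> \<zeta> * (norm u)\<^sup>2 \<le> u \<bullet> (H *v u)"
    using \<open>matrix_assumption H J \<kappa>H \<zeta>\<close> unfolding matrix_assumption_def by blast
  have gbar: "integrable M gbar" and "0 \<le> m"
    and second_moment: "(\<integral>\<^sup>+\<omega>. ennreal ((norm (gbar \<omega> - g))\<^sup>2) \<partial>M) \<le> ennreal m"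
    using \<open>gradient_assumption M gbar g m\<close> unfolding gradient_assumption_def by auto
  have pointwise: "norm (dbar \<omega> - d) \<le> norm (gbar \<omega> - g) / \<zeta>" if "\<omega> \<in> space M" for \<omega>
  proof -
    have "H *v (dbar \<omega> - d) + transpose J *v (ybar \<omega> - y) = - (gbar \<omega> - g)"
      and "J *v (dbar \<omega> - d) = 0"
      using sample that exact by (auto simp: matrix_vector_mult_diff_distrib algebra_simps)
    from kkt_null_step_norm_le[OF H_pos \<open>0 < \<zeta>\<close> this] show ?thesis
      using \<open>0 < \<zeta>\<close> by (simp add: field_simps)
  qed
  show "integrable M (\<lambda>\<omega>. norm (dbar \<omega> - d))"
    using \<open>integrable M dbar\<close> by auto
  then have "(\<integral>\<omega>. norm (dbar \<omega> - d) \<partial>M) \<le> (\<integral>\<omega>. norm (gbar \<omega> - g) / \<zeta> \<partial>M)"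
    using gbar pointwise by (intro integral_mono) auto
  also have "\<dots> = (\<integral>\<omega>. norm (gbar \<omega> - g) \<partial>M) / \<zeta>"
    by simp
  also have "\<dots> \<le> sqrt m / \<zeta>"
    using integral_le_sqrt_second_moment[OF _ _ \<open>0 \<le> m\<close>] gbar second_moment \<open>0 < \<zeta>\<close>
    by (simp add: divide_right_mono)
  finally show "(\<integral>\<omega>. norm (dbar \<omega> - d) \<partial>M) \<le> sqrt m / \<zeta>" .
qed

theorem lemma3p7:
  fixes X :: "(real^'n) set" and f :: "real^'n \<Rightarrow> real" and gradf :: "real^'n \<Rightarrow> real^'n"
    and c :: "real^'n \<Rightarrow> real^'m" and J :: "real^'n \<Rightarrow> real^'n^'m"
    and L :: real and \<gamma> :: "'m \<Rightarrow> real" and \<kappa>H \<zeta> :: real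
  assumes SA: "standing_assumption X f gradf c J L \<gamma>"
    and zeta_pos: "0 < \<zeta>"
  shows "\<exists>\<kappa>d>0. \<forall>(Mv::real) (x::real^'n) (H::real^'n^'n) (P::'w measure)
            (gbar::'w \<Rightarrow> real^'n) (dbar::'w \<Rightarrow> real^'n) (ybar::'w \<Rightarrow> real^'m) (ubar::'w \<Rightarrow> real^'n)
            (d::real^'n) (y::real^'m) (u::real^'n) (v::real^'n).
     prob_space P \<and> x \<in> X \<and>
     matrix_assumption H (J x) \<kappa>H \<zeta> \<and>
     gradient_assumption P gbar (gradf x) Mv \<and>
     (\<forall>\<omega>\<in>space P. H *v dbar \<omega> + transpose (J x) *v ybar \<omega> = - gbar \<omega> \<and>
                   J x *v dbar \<omega> = - c x \<and> dbar \<omega> \<noteq> 0) \<and>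
     H *v d + transpose (J x) *v y = - gradf x \<and> J x *v d = - c x \<and>
     v \<in> range (\<lambda>z. transpose (J x) *v z) \<and>
     (\<forall>\<omega>\<in>space P. dbar \<omega> = ubar \<omega> + v \<and> J x *v ubar \<omega> = 0) \<and>
     d = u + v \<and> J x *v u = 0
     \<longrightarrow>
     (integrable P dbar \<and> (\<integral>\<omega>. dbar \<omega> \<partial>P) = d) \<and>
     (integrable P ubar \<and> (\<integral>\<omega>. ubar \<omega> \<partial>P) = u) \<and>
     (integrable P ybar \<and> (\<integral>\<omega>. ybar \<omega> \<partial>P) = y) \<and>
     integrable P (\<lambda>\<omega>. norm (dbar \<omega> - d)) \<and>
     (\<integral>\<omega>. norm (dbar \<omega> - d) \<partial>P) \<le> \<kappa>d * sqrt Mv"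
proof (rule exI[of _ "1 / \<zeta>"], rule conjI, simp add: zeta_pos, intro allI impI, goal_cases)
  case (1 Mv x H P gbar dbar ybar ubar d y u v)
  from 1 interpret prob_space P by blast
  obtain \<sigma> where "0 < \<sigma>" and J_full_rank: "\<forall>z. \<sigma> * norm z \<le> norm (transpose (J x) *v z)"
    using SA 1 unfolding standing_assumption_def by blast
  have sample: "\<forall>\<omega>\<in>space P. H *v dbar \<omega> + transpose (J x) *v ybar \<omega> = - gbar \<omega> \<and> J x *v dbar \<omega> = - c x"
    using 1 by blast
  have unbiased: "integrable P dbar \<and> (\<integral>\<omega>. dbar \<omega> \<partial>P) = d" "integrable P ybar \<and> (\<integral>\<omega>. ybar \<omega> \<partial>P) = y"
    using stochastic_kkt_solution_unbiased[OF _ zeta_pos \<open>0 < \<sigma>\<close> J_full_rank _ _ sample] 1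
    unfolding gradient_assumption_def by blast+
  moreover have "integrable P ubar \<and> (\<integral>\<omega>. ubar \<omega> \<partial>P) = u"
    using integral_bounded_linear_affine[OF _ bounded_linear_ident, of dbar ubar "- v"] unbiased 1 by auto
  moreover have "integrable P (\<lambda>\<omega>. norm (dbar \<omega> - d))"
    and "(\<integral>\<omega>. norm (dbar \<omega> - d) \<partial>P) \<le> sqrt Mv / \<zeta>"
    using stochastic_kkt_deviation_bound[OF _ zeta_pos _ _ sample] unbiased 1 by blast+
  ultimately show ?case by simp
qed

end
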